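(* Let $R>0$. For a Ptolemy interval $([0,1],d)$ with $d(0,1)=R$ consider the curve $t\mapsto p_t=(d(t,1),d(t,0))\in Q$, $t\in[0,1]$. This assignment induces a one-to-one correspondence between isometry classes of Ptolemy intervals $([0,1],d)$ with $d(0,1)=R$ and convex curves in $T(e_R^1,e_R^2)$ from $e_R^1$ to $e_R^2$ (considered as subsets of $Q$), modulo reflection at the bisecting line $\{(a,a):a\ge0\}$ of $Q$.
   Context: A Ptolemy interval (Ptolemy segment) is a compact interval with a metric $d$ inducing its standard topology such that $d(x_1,x_3)d(x_2,x_4)=d(x_1,x_2)d(x_3,x_4)+d(x_1,x_4)d(x_3,x_2)$ whenever $x_1,x_2,x_3,x_4$ lie in this order on the interval. Let $Q=[0,\infty)\times[0,\infty)\subset\mathbb{R}^2$, $e_R^1=(R,0)$, $e_R^2=(0,R)$, and let $\arg(p)$ denote the polar angle of $p\in Q\setminus\{0\}$. For $u,w\in Q$ with $\arg(u)<\arg(w)$, $T(u,w)=\{\lambda u+\mu w\in Q:\ \lambda,\mu\ge0,\ \lambda+\mu\ge1,\ \lambda+1\ge\mu,\ \mu+1\ge\lambda\}$. A curve $t\mapsto p_t$ in $Q$, $t\in[0,1]$, from $e_R^1$ to $e_R^2$ is convex if it is continuous, $\arg(p_t)$ is strictly increasing in $t$, and the bounded component of $Q\setminus\{p_t:t\in[0,1]\}$ is convex. *)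

theory Defs
  imports "HOL-Analysis.Analysis"
begin

text \<open>A metric d on the unit interval [0,1], only its values on [0,1]x[0,1] matter;
  we restrict it to [0,1] (value 0 outside) so that the library locale applies.\<close>
definition unit_restrict :: "(real \<Rightarrow> real \<Rightarrow> real) \<Rightarrow> real \<Rightarrow> real \<Rightarrow> real" where
  "unit_restrict d x y = (if x \<in> {0..1} \<and> y \<in> {0..1} then d x y else 0)"

definition ptolemy_interval :: "(real \<Rightarrow> real \<Rightarrow> real) \<Rightarrow> bool" where
  "ptolemy_interval d \<longleftrightarrow>
     Metric_space {0..1} (unit_restrict d) \<and>
     Metric_space.mtopology {0..1} (unit_restrict d) = subtopology euclidean {0..1} \<and>
     (\<forall>x1 x2 x3 x4. 0 \<le> x1 \<and> x1 \<le> x2 \<and> x2 \<le> x3 \<and> x3 \<le> x4 \<and> x4 \<le> 1 \<longrightarrow>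
        d x1 x3 * d x2 x4 = d x1 x2 * d x3 x4 + d x1 x4 * d x3 x2)"

definition isometric_intervals :: "(real \<Rightarrow> real \<Rightarrow> real) \<Rightarrow> (real \<Rightarrow> real \<Rightarrow> real) \<Rightarrow> bool" where
  "isometric_intervals d d' \<longleftrightarrow>
     (\<exists>f. bij_betw f {0..1} {0..1} \<and> (\<forall>x\<in>{0..1}. \<forall>y\<in>{0..1}. d' (f x) (f y) = d x y))"

definition quadrant :: "(real \<times> real) set" where
  "quadrant = {p. 0 \<le> fst p \<and> 0 \<le> snd p}"

definition e1 :: "real \<Rightarrow> real \<times> real" where "e1 R = (R, 0)"
definition e2 :: "real \<Rightarrow> real \<times> real" where "e2 R = (0, R)"

definition parg :: "real \<times> real \<Rightarrow> real" where
  "parg p = Arg (Complex (fst p) (snd p))"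

definition Tset :: "real \<times> real \<Rightarrow> real \<times> real \<Rightarrow> (real \<times> real) set" where
  "Tset u w = {p. p \<in> quadrant \<and> (\<exists>a b. p = a *\<^sub>R u + b *\<^sub>R w \<and> 0 \<le> a \<and> 0 \<le> b \<and>
        a + b \<ge> 1 \<and> a + 1 \<ge> b \<and> b + 1 \<ge> a)}"

definition convex_curve :: "real \<Rightarrow> (real \<Rightarrow> real \<times> real) \<Rightarrow> bool" where
  "convex_curve R c \<longleftrightarrow>
     continuous_on {0..1} c \<and> c ` {0..1} \<subseteq> quadrant - {0} \<and>
     c 0 = e1 R \<and> c 1 = e2 R \<and>
     strict_mono_on {0..1} (\<lambda>t. parg (c t)) \<and>
     (\<forall>C\<in>components (quadrant - c ` {0..1}). bounded C \<longrightarrow> convex C)"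

definition swap_refl :: "real \<times> real \<Rightarrow> real \<times> real" where
  "swap_refl p = (snd p, fst p)"

definition eq_mod_refl :: "(real \<times> real) set \<Rightarrow> (real \<times> real) set \<Rightarrow> bool" where
  "eq_mod_refl A B \<longleftrightarrow> A = B \<or> A = swap_refl ` B"

definition ptolemy_curve :: "(real \<Rightarrow> real \<Rightarrow> real) \<Rightarrow> real \<Rightarrow> real \<times> real" where
  "ptolemy_curve d t = (d t 1, d t 0)"

end

theory Submission
  imports Defs
begin

text \<open>
  For \<open>0 \<le> s \<le> t \<le> 1\<close>, Ptolemy's equality for the four points \<open>0, s, t, 1\<close> says that
  \<open>det(p\<^sub>s, p\<^sub>t) = d(0,1) d(s,t)\<close>. Hence the curve determines the metric, positivity of
  \<open>d(s,t)\<close> means that the polar angle increases strictly, and the triangle inequality for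
  \<open>d(s,t)\<close> through an intermediate point is equivalent to the convexity of the region
  \<open>{r p\<^sub>t : 0 \<le> r < 1}\<close>, which is the bounded component of the complement of the curve in Q;
  the triangle inequalities for the triples \<open>0 \<le> t \<le> 1\<close> say that the curve lies in T.
  Conversely, for a convex curve c in T the function \<open>|det(c\<^sub>s, c\<^sub>t)| / R\<close> satisfies Ptolemy's
  equality (a Pluecker relation), its remaining triangle inequalities follow from the convexity one
  together with \<open>c \<subseteq> T\<close>, and it induces the standard topology because the identity is a
  continuous bijection from a compact space onto a Hausdorff one.
  Finally, an isometry of \<open>[0,1]\<close> is a monotone homeomorphism; it fixes or swaps the end points,
  and accordingly it fixes the curve or reflects it at the diagonal.
\<close>

section \<open>Orientation in the quadrant\<close>

definition det2 :: "real \<times> real \<Rightarrow> real \<times> real \<Rightarrow> real" where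
  "det2 p q = fst p * snd q - snd p * fst q"

lemma det2_swap: "det2 b a = - det2 a b"
  by (simp add: det2_def)

lemma det2_self [simp]: "det2 a a = 0"
  by (simp add: det2_def)

lemma det2_scaleR_left [simp]: "det2 (r *\<^sub>R a) b = r * det2 a b"
  by (simp add: det2_def algebra_simps)

lemma det2_scaleR_right [simp]: "det2 a (r *\<^sub>R b) = r * det2 a b"
  by (simp add: det2_def algebra_simps)

lemma det2_add_left: "det2 (a + a') b = det2 a b + det2 a' b"
  by (simp add: det2_def algebra_simps)

lemma det2_add_right: "det2 a (b + b') = det2 a b + det2 a b'"
  by (simp add: det2_def algebra_simps)

lemma det2_pluecker: "det2 a e * det2 b f = det2 a b * det2 e f + det2 a f * det2 b e"
  by (simp add: det2_def algebra_simps)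

lemma det2_swap_refl: "det2 (swap_refl a) (swap_refl b) = - det2 a b"
  by (simp add: swap_refl_def det2_def)

lemma swap_refl_swap_refl [simp]: "swap_refl (swap_refl p) = p"
  by (simp add: swap_refl_def)

lemma swap_refl_image_swap_refl_image [simp]: "swap_refl ` swap_refl ` A = A"
  by (simp add: image_image)

lemma quadrant_scaleR: "p \<in> quadrant \<Longrightarrow> 0 \<le> r \<Longrightarrow> r *\<^sub>R p \<in> quadrant"
  by (simp add: quadrant_def)

lemma quadrant_add: "p \<in> quadrant \<Longrightarrow> q \<in> quadrant \<Longrightarrow> p + q \<in> quadrant"
  by (simp add: quadrant_def)

lemma parg_quadrant_bounds:
  assumes "p \<in> quadrant"
  shows "0 \<le> parg p" "parg p \<le> pi / 2"
proof -
  have "0 \<le> Arg (Complex (fst p) (snd p))"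
    using assms by (simp add: Arg_less_0 quadrant_def)
  moreover have "\<bar>Arg (Complex (fst p) (snd p))\<bar> \<le> pi / 2"
    using assms Arg_Re_nonneg[of "Complex (fst p) (snd p)"] by (simp add: quadrant_def)
  ultimately show "0 \<le> parg p" "parg p \<le> pi / 2"
    by (simp_all add: parg_def)
qed

lemma det2_eq_sin_parg: "det2 a b = norm a * norm b * sin (parg b - parg a)"
proof -
  have polar: "fst p = norm p * cos (parg p)" "snd p = norm p * sin (parg p)" for p :: "real \<times> real"
  proof -
    let ?z = "Complex (fst p) (snd p)"
    have "norm p = cmod ?z"
      by (simp add: norm_prod_def cmod_def)
    then show "fst p = norm p * cos (parg p)" "snd p = norm p * sin (parg p)"
      using arg_cong[OF rcis_cmod_Arg[of ?z], of Re] arg_cong[OF rcis_cmod_Arg[of ?z], of Im]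
      unfolding parg_def by (simp_all only: Re_rcis Im_rcis complex.sel)
  qed
  show ?thesis
    by (simp only: det2_def polar[of a] polar[of b]) (simp add: sin_diff algebra_simps)
qed

lemma det2_pos_iff_parg_less:
  assumes "a \<in> quadrant - {0}" "b \<in> quadrant - {0}"
  shows "det2 a b > 0 \<longleftrightarrow> parg a < parg b"
proof -
  have bounds: "0 \<le> parg a" "parg a \<le> pi / 2" "0 \<le> parg b" "parg b \<le> pi / 2"
    using assms parg_quadrant_bounds by auto
  have "sin (parg b - parg a) > 0 \<longleftrightarrow> parg a < parg b"
  proof
    assume "parg a < parg b"
    then show "sin (parg b - parg a) > 0"
      using bounds by (intro sin_gt_zero) auto
  next
    assume "sin (parg b - parg a) > 0"
    moreover have "sin (parg a - parg b) \<ge> 0" if "parg b \<le> parg a"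
      using bounds that by (intro sin_ge_zero) auto
    ultimately show "parg a < parg b"
      by (force simp: sin_diff mult.commute)
  qed
  moreover have "norm a * norm b > 0"
    using assms by auto
  ultimately show ?thesis
    unfolding det2_eq_sin_parg by (metis mult_pos_pos zero_less_mult_pos)
qed

lemma quadrant_det2_eq_0_parallel:
  assumes a: "a \<in> quadrant - {0}" and b: "b \<in> quadrant - {0}" and det: "det2 a b = 0"
  shows "\<exists>\<rho>>0. b = \<rho> *\<^sub>R a"
proof (cases "fst a > 0")
  case True
  define \<rho> where "\<rho> = fst b / fst a"
  have "b = \<rho> *\<^sub>R a"
    using det True by (simp add: \<rho>_def prod_eq_iff det2_def field_simps)
  moreover have "\<rho> \<ge> 0"
    using a b by (simp add: \<rho>_def quadrant_def)
  ultimately show ?thesis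
    using b by (metis less_eq_real_def scale_zero_left Diff_iff singletonI)
next
  case False
  then have "fst a = 0" "snd a > 0"
    using a by (auto simp: quadrant_def prod_eq_iff)
  then have "fst b = 0"
    using det by (simp add: det2_def)
  define \<rho> where "\<rho> = snd b / snd a"
  have "b = \<rho> *\<^sub>R a"
    using \<open>fst a = 0\<close> \<open>snd a > 0\<close> \<open>fst b = 0\<close> by (simp add: \<rho>_def prod_eq_iff)
  moreover have "\<rho> \<ge> 0"
    using b \<open>snd a > 0\<close> by (simp add: \<rho>_def quadrant_def)
  ultimately show ?thesis
    using b by (metis less_eq_real_def scale_zero_left Diff_iff singletonI)
qed

section \<open>Curves of increasing polar angle and the region below them\<close>

text \<open>By \<open>det2_pos_iff_parg_less\<close>, the last condition says that the polar angle is strictly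
  increasing along the curve.\<close>

definition star_curve :: "real \<Rightarrow> (real \<Rightarrow> real \<times> real) \<Rightarrow> bool" where
  "star_curve R c \<longleftrightarrow> R > 0 \<and> continuous_on {0..1} c \<and> c ` {0..1} \<subseteq> quadrant - {0} \<and>
     c 0 = (R, 0) \<and> c 1 = (0, R) \<and>
     (\<forall>s t. 0 \<le> s \<longrightarrow> s < t \<longrightarrow> t \<le> 1 \<longrightarrow> det2 (c s) (c t) > 0)"

definition under_curve :: "(real \<Rightarrow> real \<times> real) \<Rightarrow> (real \<times> real) set" where
  "under_curve c = {r *\<^sub>R c t | r t. 0 \<le> r \<and> r < 1 \<and> t \<in> {0..1}}"

definition cone_band :: "(real \<Rightarrow> real \<times> real) \<Rightarrow> real \<Rightarrow> real \<Rightarrow> (real \<times> real) set" where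
  "cone_band c a b = (\<lambda>(r, t). r *\<^sub>R c t) ` ({a..b} \<times> {0..1})"

text \<open>For the curve of a Ptolemy interval \<open>det2 (c s) (c t) = R d(s,t)\<close> when \<open>s \<le> t\<close>, so this is
  the triangle inequality for \<open>s \<le> w \<le> t\<close>.\<close>

definition det2_subadditive :: "(real \<Rightarrow> real \<times> real) \<Rightarrow> bool" where
  "det2_subadditive c \<longleftrightarrow> (\<forall>s w t. 0 \<le> s \<longrightarrow> s \<le> w \<longrightarrow> w \<le> t \<longrightarrow> t \<le> 1 \<longrightarrow>
     det2 (c s) (c t) \<le> det2 (c s) (c w) + det2 (c w) (c t))"

lemma det2_subadditiveD:
  "det2_subadditive c \<Longrightarrow> 0 \<le> s \<Longrightarrow> s \<le> w \<Longrightarrow> w \<le> t \<Longrightarrow> t \<le> 1 \<Longrightarrow>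
     det2 (c s) (c t) \<le> det2 (c s) (c w) + det2 (c w) (c t)"
  unfolding det2_subadditive_def by blast

lemma under_curve_eq_image: "under_curve c = (\<lambda>(r, t). r *\<^sub>R c t) ` ({0..<1} \<times> {0..1})"
  unfolding under_curve_def by force

lemma mem_under_curve: "0 \<le> r \<Longrightarrow> r < 1 \<Longrightarrow> t \<in> {0..1} \<Longrightarrow> r *\<^sub>R c t \<in> under_curve c"
  unfolding under_curve_def by blast

lemma zero_in_under_curve: "0 \<in> under_curve c"
  using mem_under_curve[of 0 0 c] by simp

lemma mem_cone_band: "x \<in> cone_band c a b \<longleftrightarrow> (\<exists>r t. a \<le> r \<and> r \<le> b \<and> t \<in> {0..1} \<and> x = r *\<^sub>R c t)"
  unfolding cone_band_def by force

lemma under_curve_subset_cone_band: "under_curve c \<subseteq> cone_band c 0 1"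
  unfolding under_curve_eq_image cone_band_def by (rule image_mono) auto

context
  fixes R c
  assumes sc: "star_curve R c"
begin

lemma star_curve_pos: "R > 0"
  using sc by (simp add: star_curve_def)

lemma star_curve_continuous: "continuous_on {0..1} c"
  using sc by (simp add: star_curve_def)

lemma star_curve_in_quadrant: "t \<in> {0..1} \<Longrightarrow> c t \<in> quadrant - {0}"
  using sc unfolding star_curve_def by blast

lemma star_curve_start: "c 0 = (R, 0)"
  using sc by (simp add: star_curve_def)

lemma star_curve_end: "c 1 = (0, R)"
  using sc by (simp add: star_curve_def)

lemma star_curve_det2_pos: "0 \<le> s \<Longrightarrow> s < t \<Longrightarrow> t \<le> 1 \<Longrightarrow> det2 (c s) (c t) > 0"
  using sc by (simp add: star_curve_def)

lemma star_curve_det2_nonneg: "0 \<le> s \<Longrightarrow> s \<le> t \<Longrightarrow> t \<le> 1 \<Longrightarrow> det2 (c s) (c t) \<ge> 0"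
  using star_curve_det2_pos[of s t] by (cases "s = t") auto

lemma star_curve_det2_nonneg_iff:
  "s \<in> {0..1} \<Longrightarrow> t \<in> {0..1} \<Longrightarrow> det2 (c s) (c t) \<ge> 0 \<longleftrightarrow> s \<le> t"
  using star_curve_det2_nonneg[of s t] star_curve_det2_pos[of t s] det2_swap[of "c s" "c t"]
  by force

lemma star_curve_det2_eq_0_imp_eq:
  "s \<in> {0..1} \<Longrightarrow> t \<in> {0..1} \<Longrightarrow> det2 (c s) (c t) = 0 \<Longrightarrow> s = t"
  using star_curve_det2_pos[of s t] star_curve_det2_pos[of t s] det2_swap[of "c s" "c t"]
  by (cases s t rule: linorder_cases) auto

lemma star_curve_meets_ray:
  assumes "x \<in> quadrant - {0}"
  obtains u \<rho> where "u \<in> {0..1}" "\<rho> > 0" "x = \<rho> *\<^sub>R c u"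
proof -
  have "continuous_on {0..1} (\<lambda>t. det2 (c t) x)"
    unfolding det2_def using star_curve_continuous by (intro continuous_intros) auto
  moreover have "det2 (c 1) x \<le> 0" "0 \<le> det2 (c 0) x"
    using assms star_curve_pos by (auto simp: star_curve_start star_curve_end det2_def quadrant_def)
  ultimately obtain u where u: "u \<in> {0..1}" "det2 (c u) x = 0"
    using IVT2'[of "\<lambda>t. det2 (c t) x" 1 0 0] by auto
  with quadrant_det2_eq_0_parallel[OF star_curve_in_quadrant assms] that show ?thesis
    by blast
qed

lemma star_curve_ray_unique:
  assumes "\<rho> > 0" "\<rho>' > 0" "u \<in> {0..1}" "u' \<in> {0..1}" "\<rho> *\<^sub>R c u = \<rho>' *\<^sub>R c u'"
  shows "u = u'" "\<rho> = \<rho>'"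
proof -
  have "det2 (\<rho> *\<^sub>R c u) (\<rho>' *\<^sub>R c u') = 0"
    using assms(5) by simp
  then have "det2 (c u) (c u') = 0"
    using assms(1,2) by simp
  then show "u = u'"
    using star_curve_det2_eq_0_imp_eq assms(3,4) by blast
  moreover have "c u \<noteq> 0"
    using star_curve_in_quadrant assms(3) by auto
  ultimately show "\<rho> = \<rho>'"
    using assms(5) by (simp add: scaleR_cancel_right)
qed

lemma star_curve_norm_bounded_below: "\<exists>m>0. \<forall>t\<in>{0..1}. m \<le> norm (c t)"
proof -
  have "continuous_on {0..1} (\<lambda>t. norm (c t))"
    using star_curve_continuous by (intro continuous_intros)
  from continuous_attains_inf[OF compact_Icc _ this]
  obtain t0 where "t0 \<in> {0..1::real}" "\<forall>t\<in>{0..1}. norm (c t0) \<le> norm (c t)"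
    by auto
  moreover have "norm (c t0) > 0"
    using star_curve_in_quadrant[OF \<open>t0 \<in> _\<close>] by auto
  ultimately show ?thesis
    by blast
qed

lemma continuous_on_cone: "continuous_on (A \<times> {0..1}) (\<lambda>(r, t). r *\<^sub>R c t)"
  by (auto intro!: continuous_intros continuous_on_compose2[OF star_curve_continuous]
      simp: case_prod_unfold)

lemma cone_band_compact: "compact (cone_band c a b)"
  unfolding cone_band_def
  by (intro compact_continuous_image continuous_on_cone compact_Times compact_Icc)

lemma under_curve_subset: "under_curve c \<subseteq> quadrant - c ` {0..1}"
proof
  fix x assume "x \<in> under_curve c"
  then obtain r t where rt: "0 \<le> r" "r < 1" "t \<in> {0..1}" "x = r *\<^sub>R c t"
    by (auto simp: under_curve_def)
  have "x \<notin> c ` {0..1}"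
  proof
    assume "x \<in> c ` {0..1}"
    then obtain t' where t': "t' \<in> {0..1}" "r *\<^sub>R c t = 1 *\<^sub>R c t'"
      using rt by auto
    show False
    proof (cases "r = 0")
      case True
      then show False
        using t' star_curve_in_quadrant[OF t'(1)] by auto
    next
      case False
      then show False
        using star_curve_ray_unique(2)[OF _ _ rt(3) t'] rt by auto
    qed
  qed
  moreover have "x \<in> quadrant"
    using rt star_curve_in_quadrant[OF rt(3)] quadrant_scaleR by auto
  ultimately show "x \<in> quadrant - c ` {0..1}"
    by blast
qed

lemma under_curve_connected: "connected (under_curve c)"
  unfolding under_curve_eq_image
  by (rule connected_continuous_image[OF continuous_on_cone])
     (intro connected_Times, auto simp: is_interval_connected_1)

lemma under_curve_bounded: "bounded (under_curve c)"
  by (rule bounded_subset[OF compact_imp_bounded[OF cone_band_compact] under_curve_subset_cone_band])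

lemma cone_band_minus_curve_subset: "cone_band c 0 1 - c ` {0..1} \<subseteq> under_curve c"
proof
  fix x assume x: "x \<in> cone_band c 0 1 - c ` {0..1}"
  then obtain r t where "0 \<le> r" "r \<le> 1" "t \<in> {0..1}" "x = r *\<^sub>R c t"
    by (auto simp: mem_cone_band)
  moreover have "r \<noteq> 1"
    using x calculation by auto
  ultimately show "x \<in> under_curve c"
    by (simp add: mem_under_curve)
qed

lemma outside_under_curve:
  assumes "y \<in> quadrant - c ` {0..1}" "y \<notin> under_curve c"
  obtains \<rho> u where "\<rho> > 1" "u \<in> {0..1}" "y = \<rho> *\<^sub>R c u"
proof -
  have "y \<noteq> 0"
    using assms zero_in_under_curve by auto
  then obtain u \<rho> where u: "u \<in> {0..1}" "\<rho> > 0" "y = \<rho> *\<^sub>R c u"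
    using star_curve_meets_ray assms(1) by blast
  moreover have "\<rho> \<noteq> 1"
    using u assms(1) by auto
  moreover have "\<not> \<rho> < 1"
    using u assms(2) mem_under_curve[of \<rho> u c] by auto
  ultimately show ?thesis
    by (intro that[of \<rho> u]) auto
qed

lemma under_curve_disjoint_closure_outside:
  assumes x: "x \<in> under_curve c"
  shows "x \<notin> closure (quadrant - c ` {0..1} - under_curve c)"
proof
  define U where "U = quadrant - c ` {0..1} - under_curve c"
  assume "x \<in> closure (quadrant - c ` {0..1} - under_curve c)"
  then have x_closure: "x \<in> closure (ball x 1 \<inter> U)"
    using open_Int_closure_subset[of "ball x 1" U] unfolding U_def by auto
  obtain m where m: "m > 0" "\<forall>t\<in>{0..1}. m \<le> norm (c t)"
    using star_curve_norm_bounded_below by auto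
  \<comment> \<open>Points of \<open>U\<close> near \<open>x\<close> lie on rays beyond the curve, at a bounded distance from it.\<close>
  have "ball x 1 \<inter> U \<subseteq> cone_band c 1 ((norm x + 1) / m)"
  proof
    fix y assume y: "y \<in> ball x 1 \<inter> U"
    then obtain \<rho> u where ru: "\<rho> > 1" "u \<in> {0..1}" "y = \<rho> *\<^sub>R c u"
      using outside_under_curve unfolding U_def by blast
    have "\<rho> * m \<le> \<rho> * norm (c u)"
      using m ru by auto
    also have "\<dots> = norm y"
      using ru by simp
    also have "\<dots> \<le> norm x + 1"
      using y norm_triangle_sub[of y x] by (auto simp: dist_norm norm_minus_commute)
    finally show "y \<in> cone_band c 1 ((norm x + 1) / m)"
      unfolding mem_cone_band using ru m by (intro exI[of _ \<rho>] exI[of _ u]) (auto simp: field_simps)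
  qed
  then have "x \<in> cone_band c 1 ((norm x + 1) / m)"
    using closure_minimal[OF _ compact_imp_closed[OF cone_band_compact]] x_closure by blast
  then obtain \<rho>' u' where ru': "1 \<le> \<rho>'" "u' \<in> {0..1}" "x = \<rho>' *\<^sub>R c u'"
    unfolding mem_cone_band by auto
  obtain r t where rt: "0 \<le> r" "r < 1" "t \<in> {0..1}" "x = r *\<^sub>R c t"
    using x by (auto simp: under_curve_def)
  show False
  proof (cases "r = 0")
    case True
    then show False
      using rt ru' star_curve_in_quadrant[OF ru'(2)] by auto
  next
    case False
    then show False
      using star_curve_ray_unique(2)[of r \<rho>' t u'] rt ru' by auto
  qed
qed

lemma connected_component_zero_eq_under_curve:
  "connected_component_set (quadrant - c ` {0..1}) 0 = under_curve c"
proof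
  let ?S = "quadrant - c ` {0..1}"
  let ?C = "connected_component_set ?S 0"
  let ?A = "cone_band c 0 1" and ?B = "closure (?S - under_curve c)"
  show "under_curve c \<subseteq> ?C"
    by (rule connected_component_maximal[OF zero_in_under_curve under_curve_connected under_curve_subset])
  then have "0 \<in> ?A \<inter> ?C"
    using under_curve_subset_cone_band zero_in_under_curve by blast
  have CS: "?C \<subseteq> ?S"
    by (rule connected_component_subset)
  have in_A: "y \<in> ?A" if "y \<in> under_curve c" for y
    using that under_curve_subset_cone_band by blast
  have in_B: "y \<in> ?B" if "y \<in> ?S" "y \<notin> under_curve c" for y
    using that closure_subset[of "?S - under_curve c"] by blast
  have not_in_B: "y \<notin> ?B" if "y \<in> ?A" "y \<in> ?C" for y
  proof -
    have "y \<in> under_curve c"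
      using that CS cone_band_minus_curve_subset by blast
    then show ?thesis
      by (rule under_curve_disjoint_closure_outside)
  qed
  \<comment> \<open>\<open>?A\<close> and \<open>?B\<close> are closed, cover \<open>?C\<close> and meet only on the curve, which \<open>?C\<close> avoids.\<close>
  have "?C \<subseteq> ?A \<union> ?B"
    using CS in_A in_B by blast
  moreover have "?A \<inter> ?B \<inter> ?C = {}"
    using not_in_B by blast
  ultimately have "?A \<inter> ?C = {} \<or> ?B \<inter> ?C = {}"
    by (intro connected_closedD connected_connected_component compact_imp_closed[OF cone_band_compact]
        closed_closure)
  then have "?C \<subseteq> ?A"
    using \<open>0 \<in> ?A \<inter> ?C\<close> \<open>?C \<subseteq> ?A \<union> ?B\<close> by blast
  then show "?C \<subseteq> under_curve c"
    using CS cone_band_minus_curve_subset by blast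
qed

lemma unbounded_other_component:
  assumes "C \<in> components (quadrant - c ` {0..1})" "C \<noteq> under_curve c"
  shows "\<not> bounded C"
proof
  let ?S = "quadrant - c ` {0..1}"
  assume "bounded C"
  obtain x where x: "x \<in> ?S" "C = connected_component_set ?S x"
    using assms(1) components_iff by blast
  have "x \<notin> under_curve c"
  proof
    assume "x \<in> under_curve c"
    then have "connected_component_set ?S x = connected_component_set ?S 0"
      using connected_component_eq[of x ?S 0] connected_component_zero_eq_under_curve by simp
    then show False
      using assms(2) x(2) connected_component_zero_eq_under_curve by simp
  qed
  then obtain \<rho> u where ru: "\<rho> > 1" "u \<in> {0..1}" "x = \<rho> *\<^sub>R c u"
    using outside_under_curve x(1) by blast
  \<comment> \<open>The ray from \<open>x\<close> away from the origin stays in \<open>?S\<close>, hence in \<open>C\<close>.\<close>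
  let ?ray = "(\<lambda>s. s *\<^sub>R x) ` {1..}"
  have "?ray \<subseteq> ?S"
  proof
    fix y assume "y \<in> ?ray"
    then obtain s where s: "s \<ge> 1" "y = (s * \<rho>) *\<^sub>R c u"
      using ru by auto
    have "1 * \<rho> \<le> s * \<rho>"
      using s(1) ru(1) by (intro mult_right_mono) auto
    then have "s * \<rho> > 1"
      using ru(1) by linarith
    have "y \<notin> c ` {0..1}"
    proof
      assume "y \<in> c ` {0..1}"
      then obtain t where t: "t \<in> {0..1}" "(s * \<rho>) *\<^sub>R c u = 1 *\<^sub>R c t"
        using s(2) by auto
      have "s * \<rho> = 1"
        using star_curve_ray_unique(2)[OF _ _ ru(2) t] \<open>s * \<rho> > 1\<close> by simp
      then show False
        using \<open>s * \<rho> > 1\<close> by simp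
    qed
    moreover have "y \<in> quadrant"
      using s star_curve_in_quadrant[OF ru(2)] ru quadrant_scaleR by auto
    ultimately show "y \<in> ?S"
      by blast
  qed
  moreover have "connected ?ray"
    by (intro connected_continuous_image continuous_intros) (auto simp: is_interval_connected_1 is_interval_def)
  moreover have "x \<in> ?ray"
    by (rule image_eqI[of _ _ 1]) auto
  ultimately have "?ray \<subseteq> C"
    using connected_component_maximal x(2) by metis
  obtain B where B: "\<forall>y\<in>C. norm y \<le> B"
    using \<open>bounded C\<close> bounded_iff by blast
  have "norm x > 0"
    using ru star_curve_in_quadrant[OF ru(2)] by auto
  define s where "s = max 1 ((\<bar>B\<bar> + 1) / norm x)"
  have "s \<in> {1..}"
    by (simp add: s_def)
  then have "s *\<^sub>R x \<in> C"
    using \<open>?ray \<subseteq> C\<close> by blast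
  then have "s * norm x \<le> B"
    using B \<open>s \<in> {1..}\<close> by fastforce
  moreover have "\<bar>B\<bar> + 1 \<le> s * norm x"
    using \<open>norm x > 0\<close> mult_right_mono[of "(\<bar>B\<bar> + 1) / norm x" s "norm x"]
    by (simp add: s_def)
  ultimately show False
    by linarith
qed

lemma bounded_components_convex_iff:
  "(\<forall>C\<in>components (quadrant - c ` {0..1}). bounded C \<longrightarrow> convex C) \<longleftrightarrow> convex (under_curve c)"
proof -
  have "under_curve c \<in> components (quadrant - c ` {0..1})"
    unfolding connected_component_zero_eq_under_curve[symmetric]
    using zero_in_under_curve under_curve_subset by (blast intro: componentsI)
  then show ?thesis
    using under_curve_bounded unbounded_other_component by metis
qed

lemma combination_in_under_curve:
  assumes subadd: "det2_subadditive c"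
    and A: "0 \<le> A" and B: "0 \<le> B" and AB: "A + B < 1"
    and st: "s \<in> {0..1}" "t \<in> {0..1}" "s \<le> t"
  shows "A *\<^sub>R c s + B *\<^sub>R c t \<in> under_curve c"
proof -
  let ?z = "A *\<^sub>R c s + B *\<^sub>R c t"
  consider "s = t" | "?z = 0" | "s < t" "?z \<noteq> 0"
    using st by linarith
  then show ?thesis
  proof cases
    case 1
    then have "?z = (A + B) *\<^sub>R c s"
      by (simp add: scaleR_add_left)
    then show ?thesis
      using mem_under_curve[of "A + B" s c] A B AB st by simp
  next
    case 2
    then show ?thesis
      using zero_in_under_curve by simp
  next
    case 3
    have Dst: "det2 (c s) (c t) > 0"
      using star_curve_det2_pos 3 st by auto
    have "?z \<in> quadrant"
      using star_curve_in_quadrant st A B by (intro quadrant_add quadrant_scaleR) auto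
    then obtain w \<rho> where w: "w \<in> {0..1}" "\<rho> > 0" "?z = \<rho> *\<^sub>R c w"
      using star_curve_meets_ray 3 by blast
    have sw: "\<rho> * det2 (c s) (c w) = B * det2 (c s) (c t)"
      using arg_cong[OF w(3), of "det2 (c s)"] by (simp add: det2_add_right)
    have wt: "\<rho> * det2 (c w) (c t) = A * det2 (c s) (c t)"
      using arg_cong[OF w(3), of "\<lambda>p. det2 p (c t)"] by (simp add: det2_add_left)
    have "\<rho> * det2 (c s) (c w) \<ge> 0" "\<rho> * det2 (c w) (c t) \<ge> 0"
      unfolding sw wt using A B Dst by simp_all
    then have "det2 (c s) (c w) \<ge> 0" "det2 (c w) (c t) \<ge> 0"
      using w(2) by (simp_all add: zero_le_mult_iff)
    then have "s \<le> w" "w \<le> t"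
      using star_curve_det2_nonneg_iff st w(1) by auto
    then have le: "det2 (c s) (c t) \<le> det2 (c s) (c w) + det2 (c w) (c t)"
      using det2_subadditiveD[OF subadd] st w(1) by simp
    have "\<rho> * (det2 (c s) (c w) + det2 (c w) (c t)) = (A + B) * det2 (c s) (c t)"
      using sw wt by (simp add: algebra_simps)
    also have "\<dots> \<le> (A + B) * (det2 (c s) (c w) + det2 (c w) (c t))"
      using le A B by (intro mult_left_mono) auto
    finally have "\<rho> \<le> A + B"
      using le Dst by (simp add: mult_le_cancel_right_pos)
    then show ?thesis
      using w AB mem_under_curve[of \<rho> w c] by simp
  qed
qed

lemma convex_under_curve_if_det2_subadditive:
  assumes "det2_subadditive c"
  shows "convex (under_curve c)"
  unfolding convex_def
proof (intro ballI allI impI)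
  fix x y u v
  assume "x \<in> under_curve c" "y \<in> under_curve c" and uv: "0 \<le> (u::real)" "0 \<le> v" "u + v = 1"
  then obtain a s b t where as: "0 \<le> a" "a < 1" "s \<in> {0..1}" "x = a *\<^sub>R c s"
    and bt: "0 \<le> b" "b < 1" "t \<in> {0..1}" "y = b *\<^sub>R c t"
    by (auto simp: under_curve_def)
  have "u * a + v * b \<le> u * max a b + v * max a b"
    using uv by (intro add_mono mult_left_mono) auto
  also have "\<dots> = max a b"
    using uv by (simp add: distrib_right[symmetric])
  finally have AB: "u * a + v * b < 1"
    using as bt by linarith
  have nonneg: "u * a \<ge> 0" "v * b \<ge> 0"
    using uv as bt by simp_all
  have eq: "u *\<^sub>R x + v *\<^sub>R y = (u * a) *\<^sub>R c s + (v * b) *\<^sub>R c t"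
    using as bt by simp
  show "u *\<^sub>R x + v *\<^sub>R y \<in> under_curve c"
  proof (cases "s \<le> t")
    case True
    then show ?thesis
      unfolding eq using combination_in_under_curve[OF assms] nonneg as(3) bt(3) AB by blast
  next
    case False
    then have "(v * b) *\<^sub>R c t + (u * a) *\<^sub>R c s \<in> under_curve c"
      using combination_in_under_curve[OF assms] nonneg as(3) bt(3) AB by simp
    then show ?thesis
      unfolding eq by (simp add: add.commute)
  qed
qed

lemma curve_in_closure_under_curve:
  assumes "t \<in> {0..1}"
  shows "c t \<in> closure (under_curve c)"
proof -
  let ?f = "\<lambda>n. (1 - inverse (real (Suc n))) *\<^sub>R c t"
  have "?f \<longlonglongrightarrow> (1 - 0) *\<^sub>R c t"
    by (intro tendsto_intros LIMSEQ_inverse_real_of_nat)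
  moreover have "?f n \<in> under_curve c" for n
    using assms by (intro mem_under_curve) (auto simp: inverse_le_1_iff)
  ultimately show ?thesis
    unfolding closure_sequential by (intro exI[of _ ?f]) simp
qed

lemma det2_subadditive_if_convex_under_curve:
  assumes "convex (under_curve c)"
  shows "det2_subadditive c"
  unfolding det2_subadditive_def
proof (intro allI impI)
  fix a b e :: real
  assume ord: "0 \<le> a" "a \<le> b" "b \<le> e" "e \<le> 1"
  let ?Dab = "det2 (c a) (c b)" and ?Dbe = "det2 (c b) (c e)" and ?Dae = "det2 (c a) (c e)"
  define S where "S = ?Dab + ?Dbe"
  have Dab: "?Dab \<ge> 0" and Dbe: "?Dbe \<ge> 0" and Dae: "?Dae \<ge> 0"
    using star_curve_det2_nonneg ord by auto
  show "?Dae \<le> ?Dab + ?Dbe"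
  proof (cases "S = 0")
    case True
    then have "?Dab = 0" "?Dbe = 0"
      using Dab Dbe by (simp_all add: S_def)
    then have "a = b" "b = e"
      using star_curve_det2_eq_0_imp_eq ord by simp_all
    then show ?thesis
      by simp
  next
    case False
    then have S: "S > 0"
      using Dab Dbe by (simp add: S_def)
    \<comment> \<open>The chord from \<open>c a\<close> to \<open>c e\<close> meets the ray through \<open>c b\<close> in \<open>(?Dae / S) c b\<close>.\<close>
    have ident: "?Dbe *\<^sub>R c a + ?Dab *\<^sub>R c e = ?Dae *\<^sub>R c b"
      by (simp add: det2_def prod_eq_iff algebra_simps)
    have chord: "(?Dbe / S) *\<^sub>R c a + (?Dab / S) *\<^sub>R c e = (?Dae / S) *\<^sub>R c b"
      using arg_cong[OF ident, of "scaleR (1 / S)"] by (simp add: scaleR_add_right)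
    have "(?Dbe / S) *\<^sub>R c a + (?Dab / S) *\<^sub>R c e \<in> closure (under_curve c)"
    proof (rule convexD[OF convex_closure[OF assms]])
      show "c a \<in> closure (under_curve c)" "c e \<in> closure (under_curve c)"
        using ord by (auto intro: curve_in_closure_under_curve)
      show "0 \<le> ?Dbe / S" "0 \<le> ?Dab / S"
        using Dab Dbe S by simp_all
      show "?Dbe / S + ?Dab / S = 1"
        using S by (simp add: S_def add_divide_distrib[symmetric])
    qed
    also have "closure (under_curve c) \<subseteq> cone_band c 0 1"
      by (intro closure_minimal under_curve_subset_cone_band compact_imp_closed cone_band_compact)
    finally obtain r t where rt: "0 \<le> r" "r \<le> 1" "t \<in> {0..1}" "(?Dae / S) *\<^sub>R c b = r *\<^sub>R c t"
      unfolding chord mem_cone_band by auto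
    have "?Dae / S \<le> 1"
    proof (cases "?Dae = 0")
      case False
      then have pos: "?Dae / S > 0"
        using Dae S by simp
      moreover have "c b \<noteq> 0"
        using star_curve_in_quadrant[of b] ord by auto
      ultimately have "r \<noteq> 0"
        using rt(4) by auto
      then have "?Dae / S = r"
        using star_curve_ray_unique(2)[OF pos _ _ rt(3) rt(4)] rt(1) ord by simp
      then show ?thesis
        using rt(2) by simp
    qed simp
    then show ?thesis
      using S by (simp add: S_def divide_le_eq)
  qed
qed

lemma convex_under_curve_iff: "convex (under_curve c) \<longleftrightarrow> det2_subadditive c"
  using convex_under_curve_if_det2_subadditive det2_subadditive_if_convex_under_curve by blast

end

lemma convex_curve_iff:
  assumes "R > 0"
  shows "convex_curve R c \<longleftrightarrow> star_curve R c \<and> det2_subadditive c"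
proof
  assume "convex_curve R c"
  then have cont: "continuous_on {0..1} c" and Q: "c ` {0..1} \<subseteq> quadrant - {0}"
    and ends: "c 0 = e1 R" "c 1 = e2 R" and sm: "strict_mono_on {0..1} (\<lambda>t. parg (c t))"
    and comps: "\<forall>C\<in>components (quadrant - c ` {0..1}). bounded C \<longrightarrow> convex C"
    unfolding convex_curve_def by blast+
  have sc: "star_curve R c"
    unfolding star_curve_def
  proof (intro conjI allI impI)
    show "c 0 = (R, 0)" "c 1 = (0, R)"
      using ends by (simp_all add: e1_def e2_def)
    fix s t :: real assume st: "0 \<le> s" "s < t" "t \<le> 1"
    then have "parg (c s) < parg (c t)"
      using strict_mono_onD[OF sm, of s t] by simp
    moreover have "c s \<in> quadrant - {0}" "c t \<in> quadrant - {0}"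
      using Q st by (simp_all add: image_subset_iff)
    ultimately show "0 < det2 (c s) (c t)"
      using det2_pos_iff_parg_less[of "c s" "c t"] by simp
  qed fact+
  moreover have "det2_subadditive c"
    using comps bounded_components_convex_iff[OF sc] convex_under_curve_iff[OF sc] by blast
  ultimately show "star_curve R c \<and> det2_subadditive c"
    by blast
next
  assume "star_curve R c \<and> det2_subadditive c"
  then have sc: "star_curve R c" and subadd: "det2_subadditive c"
    by auto
  show "convex_curve R c"
    unfolding convex_curve_def
  proof (intro conjI)
    show "continuous_on {0..1} c" "c 0 = e1 R" "c 1 = e2 R"
      using sc by (simp_all add: star_curve_def e1_def e2_def)
    show "c ` {0..1} \<subseteq> quadrant - {0}"
      by (rule image_subsetI) (rule star_curve_in_quadrant[OF sc])
    show "strict_mono_on {0..1} (\<lambda>t. parg (c t))"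
      unfolding strict_mono_on_def
    proof (intro allI impI)
      fix s t :: real assume st: "s \<in> {0..1} \<and> t \<in> {0..1} \<and> s < t"
      then have "det2 (c s) (c t) > 0"
        using star_curve_det2_pos[OF sc, of s t] by auto
      then show "parg (c s) < parg (c t)"
        using det2_pos_iff_parg_less star_curve_in_quadrant[OF sc] st by blast
    qed
    show "\<forall>C\<in>components (quadrant - c ` {0..1}). bounded C \<longrightarrow> convex C"
      using bounded_components_convex_iff[OF sc] convex_under_curve_iff[OF sc] subadd by blast
  qed
qed

section \<open>Metrics inducing the euclidean topology\<close>

context
  fixes S :: "'a::metric_space set" and m :: "'a \<Rightarrow> 'a \<Rightarrow> real"
  assumes ms: "Metric_space S m"
begin

lemma mtopology_euclidean_mdist_small:
  assumes top: "Metric_space.mtopology S m = subtopology euclidean S"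
    and "x \<in> S" "e > 0"
  shows "\<exists>\<delta>>0. \<forall>y\<in>S. dist y x < \<delta> \<longrightarrow> m x y < e"
proof -
  have "openin (subtopology euclidean S) (Metric_space.mball S m x e)"
    using Metric_space.openin_mball[OF ms] top by metis
  then obtain T where T: "open T" "Metric_space.mball S m x e = T \<inter> S"
    unfolding openin_subtopology by auto
  have "x \<in> T"
    using T(2) Metric_space.centre_in_mball_iff[OF ms, of x e] assms by auto
  then obtain \<delta> where "\<delta> > 0" "ball x \<delta> \<subseteq> T"
    using T(1) open_contains_ball by blast
  moreover have "m x y < e" if "y \<in> S" "y \<in> ball x \<delta>" "ball x \<delta> \<subseteq> T" for y
    using that T(2) Metric_space.in_mball[OF ms, of y x e] by blast
  ultimately show ?thesis
    by (auto simp: dist_commute)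
qed

lemma mtopology_euclidean_dist_small:
  assumes top: "Metric_space.mtopology S m = subtopology euclidean S"
    and "x \<in> S" "e > 0"
  shows "\<exists>r>0. \<forall>y\<in>S. m x y < r \<longrightarrow> dist y x < e"
proof -
  have "openin (Metric_space.mtopology S m) (ball x e \<inter> S)"
    using top by (auto simp: openin_subtopology)
  then obtain r where "r > 0" "Metric_space.mball S m x r \<subseteq> ball x e \<inter> S"
    using Metric_space.openin_mtopology[OF ms] assms by (meson IntI centre_in_ball)
  then show ?thesis
    using Metric_space.in_mball[OF ms] assms by (auto simp: dist_commute subset_iff)
qed

lemma mtopology_eq_euclidean:
  assumes "compact S" and cont: "\<And>x. x \<in> S \<Longrightarrow> continuous_on S (m x)"
  shows "Metric_space.mtopology S m = subtopology euclidean S"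
proof -
  have "continuous_map (subtopology euclidean S) (Metric_space.mtopology S m) id"
    unfolding Metric_space.continuous_map_to_metric[OF ms]
  proof (intro ballI allI impI)
    fix x e assume "x \<in> topspace (subtopology euclidean S)" "(0::real) < e"
    then have x: "x \<in> S" and e: "e > 0"
      by auto
    obtain \<delta> where \<delta>: "\<delta> > 0" "\<forall>y\<in>S. dist y x < \<delta> \<longrightarrow> dist (m x y) (m x x) < e"
      using cont[OF x] x e unfolding continuous_on_iff by blast
    show "\<exists>U. openin (subtopology euclidean S) U \<and> x \<in> U \<and>
            (\<forall>y\<in>U. id y \<in> Metric_space.mball S m (id x) e)"
    proof (intro exI[of _ "ball x \<delta> \<inter> S"] conjI ballI)
      show "openin (subtopology euclidean S) (ball x \<delta> \<inter> S)"
        unfolding openin_subtopology by auto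
      show "x \<in> ball x \<delta> \<inter> S"
        using x \<delta> by auto
      fix y assume y: "y \<in> ball x \<delta> \<inter> S"
      then have "dist y x < \<delta>"
        by (simp add: dist_commute)
      then have "dist (m x y) (m x x) < e"
        using \<delta> y by blast
      then have "m x y < e"
        using x Metric_space.zero[OF ms, of x x] by (simp add: dist_real_def)
      then show "id y \<in> Metric_space.mball S m (id x) e"
        using x y Metric_space.in_mball[OF ms] by simp
    qed
  qed
  then have "homeomorphic_map (subtopology euclidean S) (Metric_space.mtopology S m) id"
    using Metric_space.Hausdorff_space_mtopology[OF ms] Metric_space.topspace_mtopology[OF ms]
      \<open>compact S\<close> by (intro continuous_imp_homeomorphic_map) (auto simp: compact_space_subtopology)
  then show ?thesis
    by simp
qed

end

section \<open>The curve of a Ptolemy interval\<close>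

lemma unit_restrict_eq [simp]: "x \<in> {0..1} \<Longrightarrow> y \<in> {0..1} \<Longrightarrow> unit_restrict d x y = d x y"
  by (simp add: unit_restrict_def)

context
  fixes d :: "real \<Rightarrow> real \<Rightarrow> real"
  assumes P: "ptolemy_interval d"
begin

lemma ptolemy_metric_space: "Metric_space {0..1} (unit_restrict d)"
  using P by (simp add: ptolemy_interval_def)

lemma ptolemy_mtopology: "Metric_space.mtopology {0..1} (unit_restrict d) = subtopology euclidean {0..1}"
  using P by (simp add: ptolemy_interval_def)

lemma ptolemy_equality:
  "0 \<le> x1 \<Longrightarrow> x1 \<le> x2 \<Longrightarrow> x2 \<le> x3 \<Longrightarrow> x3 \<le> x4 \<Longrightarrow> x4 \<le> 1 \<Longrightarrow>
     d x1 x3 * d x2 x4 = d x1 x2 * d x3 x4 + d x1 x4 * d x3 x2"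
  using P unfolding ptolemy_interval_def by blast

lemma ptolemy_nonneg: "x \<in> {0..1} \<Longrightarrow> y \<in> {0..1} \<Longrightarrow> 0 \<le> d x y"
  using Metric_space.nonneg[OF ptolemy_metric_space, of x y] by simp

lemma ptolemy_commute: "x \<in> {0..1} \<Longrightarrow> y \<in> {0..1} \<Longrightarrow> d x y = d y x"
  using Metric_space.commute[OF ptolemy_metric_space, of x y] by simp

lemma ptolemy_eq_0_iff: "x \<in> {0..1} \<Longrightarrow> y \<in> {0..1} \<Longrightarrow> d x y = 0 \<longleftrightarrow> x = y"
  using Metric_space.zero[OF ptolemy_metric_space, of x y] by simp

lemma ptolemy_triangle:
  "x \<in> {0..1} \<Longrightarrow> y \<in> {0..1} \<Longrightarrow> z \<in> {0..1} \<Longrightarrow> d x z \<le> d x y + d y z"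
  using Metric_space.triangle[OF ptolemy_metric_space, of x y z] by simp

lemma ptolemy_dist_0_1_pos: "d 0 1 > 0"
  using ptolemy_nonneg[of 0 1] ptolemy_eq_0_iff[of 0 1] by simp

lemma det2_ptolemy_curve:
  assumes "0 \<le> x" "x \<le> y" "y \<le> 1"
  shows "det2 (ptolemy_curve d x) (ptolemy_curve d y) = d 0 1 * d x y"
proof -
  have "d 0 y * d x 1 = d 0 x * d y 1 + d 0 1 * d y x"
    using ptolemy_equality[of 0 x y 1] assms by simp
  moreover have "d 0 y = d y 0" "d 0 x = d x 0" "d y x = d x y"
    using assms ptolemy_commute by auto
  ultimately show ?thesis
    unfolding det2_def ptolemy_curve_def by (simp add: algebra_simps)
qed

lemma ptolemy_eq_abs_det2:
  assumes "x \<in> {0..1}" "y \<in> {0..1}"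
  shows "d x y = \<bar>det2 (ptolemy_curve d x) (ptolemy_curve d y)\<bar> / d 0 1"
proof (cases "x \<le> y")
  case True
  then show ?thesis
    using det2_ptolemy_curve[of x y] assms ptolemy_dist_0_1_pos ptolemy_nonneg[of x y]
    by (simp add: abs_mult)
next
  case False
  then show ?thesis
    using det2_ptolemy_curve[of y x] assms ptolemy_dist_0_1_pos ptolemy_nonneg[of x y]
      ptolemy_commute[of x y] det2_swap[of "ptolemy_curve d x"]
    by (simp add: abs_mult)
qed

lemma ptolemy_small_if_close:
  "x \<in> {0..1} \<Longrightarrow> e > 0 \<Longrightarrow> \<exists>\<delta>>0. \<forall>y\<in>{0..1}. dist y x < \<delta> \<longrightarrow> d x y < e"
  using mtopology_euclidean_mdist_small[OF ptolemy_metric_space ptolemy_mtopology] by fastforce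

lemma ptolemy_close_if_small:
  "x \<in> {0..1} \<Longrightarrow> e > 0 \<Longrightarrow> \<exists>r>0. \<forall>y\<in>{0..1}. d x y < r \<longrightarrow> dist y x < e"
  using mtopology_euclidean_dist_small[OF ptolemy_metric_space ptolemy_mtopology] by fastforce

lemma ptolemy_continuous_on:
  assumes a: "a \<in> {0..1}"
  shows "continuous_on {0..1} (\<lambda>t. d t a)"
  unfolding continuous_on_iff
proof (intro ballI allI impI)
  fix x e :: real assume x: "x \<in> {0..1}" and "e > 0"
  then obtain \<delta> where \<delta>: "\<delta> > 0" "\<forall>y\<in>{0..1}. dist y x < \<delta> \<longrightarrow> d x y < e"
    using ptolemy_small_if_close by blast
  have "dist (d y a) (d x a) < e" if y: "y \<in> {0..1}" "dist y x < \<delta>" for y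
  proof -
    have "d x a \<le> d x y + d y a" "d y a \<le> d y x + d x a" "d y x = d x y"
      using ptolemy_triangle[of x y a] ptolemy_triangle[of y x a] ptolemy_commute[of y x] a x y
      by auto
    then show ?thesis
      using \<delta> y by (force simp: dist_real_def abs_less_iff)
  qed
  then show "\<exists>\<delta>>0. \<forall>y\<in>{0..1}. dist y x < \<delta> \<longrightarrow> dist (d y a) (d x a) < e"
    using \<delta>(1) by blast
qed

lemma star_curve_ptolemy_curve: "star_curve (d 0 1) (ptolemy_curve d)"
  unfolding star_curve_def
proof (intro conjI allI impI)
  show "0 < d 0 1"
    by (rule ptolemy_dist_0_1_pos)
  show "continuous_on {0..1} (ptolemy_curve d)"
    unfolding ptolemy_curve_def by (intro continuous_on_Pair ptolemy_continuous_on) auto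
  show "ptolemy_curve d ` {0..1} \<subseteq> quadrant - {0}"
  proof (rule image_subsetI)
    fix t :: real assume "t \<in> {0..1}"
    then show "ptolemy_curve d t \<in> quadrant - {0}"
      using ptolemy_nonneg ptolemy_eq_0_iff[of t 1] ptolemy_eq_0_iff[of t 0]
      by (auto simp: ptolemy_curve_def quadrant_def prod_eq_iff)
  qed
  show "ptolemy_curve d 0 = (d 0 1, 0)" "ptolemy_curve d 1 = (0, d 0 1)"
    using ptolemy_eq_0_iff[of 0 0] ptolemy_eq_0_iff[of 1 1] ptolemy_commute[of 1 0]
    by (simp_all add: ptolemy_curve_def)
  fix s t :: real assume st: "0 \<le> s" "s < t" "t \<le> 1"
  then have "d s t > 0"
    using ptolemy_nonneg[of s t] ptolemy_eq_0_iff[of s t] by force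
  then show "0 < det2 (ptolemy_curve d s) (ptolemy_curve d t)"
    using det2_ptolemy_curve[of s t] st ptolemy_dist_0_1_pos by simp
qed

lemma det2_subadditive_ptolemy_curve: "det2_subadditive (ptolemy_curve d)"
  unfolding det2_subadditive_def
proof (intro allI impI)
  fix s w t :: real assume o: "0 \<le> s" "s \<le> w" "w \<le> t" "t \<le> 1"
  then have "d 0 1 * d s t \<le> d 0 1 * (d s w + d w t)"
    using ptolemy_triangle[of s w t] ptolemy_dist_0_1_pos by (intro mult_left_mono) auto
  then show "det2 (ptolemy_curve d s) (ptolemy_curve d t)
      \<le> det2 (ptolemy_curve d s) (ptolemy_curve d w) + det2 (ptolemy_curve d w) (ptolemy_curve d t)"
    using det2_ptolemy_curve[of s t] det2_ptolemy_curve[of s w] det2_ptolemy_curve[of w t] o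
    by (simp add: distrib_left)
qed

lemma ptolemy_curve_in_Tset:
  assumes t: "t \<in> {0..1}"
  shows "ptolemy_curve d t \<in> Tset (e1 (d 0 1)) (e2 (d 0 1))"
proof -
  let ?R = "d 0 1"
  define a where "a = d t 1 / ?R"
  define b where "b = d t 0 / ?R"
  have R: "?R > 0"
    by (rule ptolemy_dist_0_1_pos)
  have "ptolemy_curve d t = a *\<^sub>R e1 ?R + b *\<^sub>R e2 ?R"
    using R by (simp add: a_def b_def e1_def e2_def ptolemy_curve_def)
  moreover have "d 0 1 \<le> d t 0 + d t 1" "d t 0 \<le> d t 1 + d 0 1" "d t 1 \<le> d t 0 + d 0 1"
    using ptolemy_triangle[of 0 t 1] ptolemy_triangle[of t 1 0] ptolemy_triangle[of t 0 1]
      ptolemy_commute[of 0 t] ptolemy_commute[of 1 0] t by auto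
  then have "a + b \<ge> 1" "a + 1 \<ge> b" "b + 1 \<ge> a"
    using R by (simp_all add: a_def b_def field_simps)
  moreover have "a \<ge> 0" "b \<ge> 0" "ptolemy_curve d t \<in> quadrant"
    using R ptolemy_nonneg t by (auto simp: a_def b_def quadrant_def ptolemy_curve_def)
  ultimately show ?thesis
    unfolding Tset_def by blast
qed

lemma inj_on_ptolemy_curve: "inj_on (ptolemy_curve d) {0..1}"
proof (rule inj_onI)
  fix x y assume "x \<in> {0..1}" "y \<in> {0..1}" "ptolemy_curve d x = ptolemy_curve d y"
  then show "x = y"
    using ptolemy_eq_abs_det2[of x y] ptolemy_eq_0_iff[of x y] by simp
qed

end

lemma convex_curve_ptolemy_curve:
  assumes "ptolemy_interval d"
  shows "convex_curve (d 0 1) (ptolemy_curve d)"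
  using assms convex_curve_iff ptolemy_dist_0_1_pos star_curve_ptolemy_curve
    det2_subadditive_ptolemy_curve by blast

section \<open>The Ptolemy interval of a convex curve\<close>

lemma triangle_if_sorted_triangles:
  fixes f :: "'a::linorder \<Rightarrow> 'a \<Rightarrow> real"
  assumes sym: "\<And>x y. x \<in> S \<Longrightarrow> y \<in> S \<Longrightarrow> f x y = f y x"
    and sorted: "\<And>a b e. a \<in> S \<Longrightarrow> b \<in> S \<Longrightarrow> e \<in> S \<Longrightarrow> a \<le> b \<Longrightarrow> b \<le> e \<Longrightarrow>
      f a e \<le> f a b + f b e \<and> f a b \<le> f a e + f b e \<and> f b e \<le> f a b + f a e"
    and S: "x \<in> S" "y \<in> S" "z \<in> S"
  shows "f x z \<le> f x y + f y z"
proof -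
  have f_sym: "f x y = f y x" "f y z = f z y" "f x z = f z x"
    using sym S by auto
  consider "x \<le> y" "y \<le> z" | "x \<le> z" "z \<le> y" | "y \<le> x" "x \<le> z"
    | "y \<le> z" "z \<le> x" | "z \<le> x" "x \<le> y" | "z \<le> y" "y \<le> x"
    by (meson linear)
  then show ?thesis
  proof cases
    case 1
    then show ?thesis using sorted[of x y z] S by simp
  next
    case 2
    then show ?thesis using sorted[of x z y] S f_sym by simp
  next
    case 3
    then show ?thesis using sorted[of y x z] S f_sym by simp
  next
    case 4
    then show ?thesis using sorted[of y z x] S f_sym by simp
  next
    case 5
    then show ?thesis using sorted[of z x y] S f_sym by simp
  next
    case 6
    then show ?thesis using sorted[of z y x] S f_sym by simp
  qed
qed

lemma Tset_e1_e2_bounds: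
  assumes "p \<in> Tset (e1 R) (e2 R)" "R > 0"
  shows "0 \<le> fst p" "0 \<le> snd p" "R \<le> fst p + snd p" "snd p \<le> fst p + R" "fst p \<le> snd p + R"
proof -
  obtain a b where ab: "p = a *\<^sub>R e1 R + b *\<^sub>R e2 R" "0 \<le> a" "0 \<le> b"
    "a + b \<ge> 1" "a + 1 \<ge> b" "b + 1 \<ge> a"
    using assms(1) unfolding Tset_def by blast
  then have p: "fst p = a * R" "snd p = b * R"
    by (simp_all add: e1_def e2_def)
  have "1 * R \<le> (a + b) * R" "b * R \<le> (a + 1) * R" "a * R \<le> (b + 1) * R"
    using ab assms(2) by (intro mult_right_mono; simp)+
  then show "0 \<le> fst p" "0 \<le> snd p" "R \<le> fst p + snd p" "snd p \<le> fst p + R" "fst p \<le> snd p + R"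
    using ab assms(2) unfolding p by (simp_all add: distrib_right)
qed

definition curve_metric :: "real \<Rightarrow> (real \<Rightarrow> real \<times> real) \<Rightarrow> real \<Rightarrow> real \<Rightarrow> real" where
  "curve_metric R c x y = \<bar>det2 (c x) (c y)\<bar> / R"

context
  fixes R c
  assumes sc: "star_curve R c"
    and in_T: "c ` {0..1} \<subseteq> Tset (e1 R) (e2 R)"
    and subadd: "det2_subadditive c"
begin

lemma det2_start: "det2 (c 0) (c t) = R * snd (c t)"
  by (simp add: star_curve_start[OF sc] det2_def)

lemma det2_end: "det2 (c t) (c 1) = R * fst (c t)"
  by (simp add: star_curve_end[OF sc] det2_def)

lemma curve_Tset_bounds:
  assumes "t \<in> {0..1}"
  shows "0 \<le> fst (c t)" "0 \<le> snd (c t)" "snd (c t) \<le> fst (c t) + R" "fst (c t) \<le> snd (c t) + R"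
proof -
  have "c t \<in> Tset (e1 R) (e2 R)"
    using in_T assms by blast
  then show "0 \<le> fst (c t)" "0 \<le> snd (c t)" "snd (c t) \<le> fst (c t) + R" "fst (c t) \<le> snd (c t) + R"
    using Tset_e1_e2_bounds star_curve_pos[OF sc] by blast+
qed

lemma det2_le_end: 
  assumes "a \<in> {0..1}" "e \<in> {0..1}"
  shows "det2 (c a) (c e) \<le> det2 (c a) (c 1) + det2 (c e) (c 1)"
proof -
  obtain xa ya xe ye where a: "c a = (xa, ya)" and e: "c e = (xe, ye)"
    by fastforce
  have "xa \<ge> 0" "ya \<ge> 0" "xa \<le> ya + R" "xe \<ge> 0" "ye \<le> xe + R"
    using curve_Tset_bounds[OF assms(1)] curve_Tset_bounds[OF assms(2)] a e by auto
  then have "xa * ye \<le> xa * (xe + R)" "(xa - ya) * xe \<le> R * xe"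
    by (simp_all add: mult_left_mono mult_right_mono)
  then show ?thesis
    using det2_end[of a] det2_end[of e] a e by (simp add: det2_def algebra_simps)
qed

lemma det2_le_start:
  assumes "b \<in> {0..1}" "e \<in> {0..1}"
  shows "det2 (c b) (c e) \<le> det2 (c 0) (c b) + det2 (c 0) (c e)"
proof -
  obtain xb yb xe ye where b: "c b = (xb, yb)" and e: "c e = (xe, ye)"
    by fastforce
  have "yb \<ge> 0" "xb \<le> yb + R" "ye \<ge> 0" "xe \<ge> 0" "ye \<le> xe + R"
    using curve_Tset_bounds[OF assms(1)] curve_Tset_bounds[OF assms(2)] b e by auto
  then have "xb * ye \<le> (yb + R) * ye" "yb * (ye - xe) \<le> yb * R"
    by (simp_all add: mult_left_mono mult_right_mono)
  then show ?thesis
    using det2_start[of b] det2_start[of e] b e by (simp add: det2_def algebra_simps)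
qed

text \<open>The two triangle inequalities not covered by \<open>det2_subadditive\<close> reduce, by a Pluecker
  relation with the end point, to \<open>det2_le_end\<close> and \<open>det2_le_start\<close>.\<close>

lemma det2_le_sum_right:
  assumes "0 \<le> a" "a \<le> b" "b \<le> e" "e \<le> 1"
  shows "det2 (c a) (c b) \<le> det2 (c a) (c e) + det2 (c b) (c e)"
proof (cases "e = 1")
  case True
  then show ?thesis
    using det2_le_end[of a b] assms by simp
next
  case False
  let ?D = "\<lambda>s t. det2 (c s) (c t)"
  have pos: "?D e 1 > 0"
    using star_curve_det2_pos[OF sc, of e 1] assms False by simp
  have nonneg: "?D a e \<ge> 0" "?D b e \<ge> 0"
    using star_curve_det2_nonneg[OF sc] assms by auto
  have "?D a b * ?D e 1 = ?D a e * ?D b 1 - ?D a 1 * ?D b e"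
    using det2_pluecker[of "c a" "c e" "c b" "c 1"] by simp
  also have "\<dots> \<le> ?D a e * (?D b e + ?D e 1) - ?D a 1 * ?D b e"
    using det2_subadditiveD[OF subadd, of b e 1] nonneg assms by (simp add: mult_left_mono)
  also have "\<dots> = ?D a e * ?D e 1 + ?D b e * (?D a e - ?D a 1)"
    by (simp add: algebra_simps)
  also have "\<dots> \<le> ?D a e * ?D e 1 + ?D b e * ?D e 1"
    using det2_le_end[of a e] nonneg assms by (simp add: mult_left_mono)
  finally have "?D a b * ?D e 1 \<le> (?D a e + ?D b e) * ?D e 1"
    by (simp add: distrib_right)
  then show ?thesis
    using pos by (simp add: mult_le_cancel_right_pos)
qed

lemma det2_le_sum_left:
  assumes "0 \<le> a" "a \<le> b" "b \<le> e" "e \<le> 1"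
  shows "det2 (c b) (c e) \<le> det2 (c a) (c b) + det2 (c a) (c e)"
proof (cases "a = 0")
  case True
  then show ?thesis
    using det2_le_start[of b e] assms by simp
next
  case False
  let ?D = "\<lambda>s t. det2 (c s) (c t)"
  have pos: "?D 0 a > 0"
    using star_curve_det2_pos[OF sc, of 0 a] assms False by simp
  have nonneg: "?D a b \<ge> 0" "?D a e \<ge> 0"
    using star_curve_det2_nonneg[OF sc] assms by auto
  have "?D 0 a * ?D b e = ?D 0 b * ?D a e - ?D 0 e * ?D a b"
    using det2_pluecker[of "c 0" "c b" "c a" "c e"] by (simp add: algebra_simps)
  also have "\<dots> \<le> (?D 0 a + ?D a b) * ?D a e - ?D 0 e * ?D a b"
    using det2_subadditiveD[OF subadd, of 0 a b] nonneg assms by (simp add: mult_right_mono)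
  also have "\<dots> = ?D 0 a * ?D a e + ?D a b * (?D a e - ?D 0 e)"
    by (simp add: algebra_simps)
  also have "\<dots> \<le> ?D 0 a * ?D a e + ?D a b * ?D 0 a"
    using det2_le_start[of a e] nonneg assms by (simp add: mult_left_mono)
  finally have "?D 0 a * ?D b e \<le> ?D 0 a * (?D a b + ?D a e)"
    by (simp add: algebra_simps)
  then show ?thesis
    using pos by (simp add: mult_le_cancel_left_pos)
qed

lemma curve_metric_sorted:
  assumes "0 \<le> x" "x \<le> y" "y \<le> 1"
  shows "curve_metric R c x y = det2 (c x) (c y) / R"
  using star_curve_det2_nonneg[OF sc] assms by (simp add: curve_metric_def)

lemma curve_metric_triangle:
  assumes "x \<in> {0..1}" "y \<in> {0..1}" "z \<in> {0..1}"
  shows "curve_metric R c x z \<le> curve_metric R c x y + curve_metric R c y z"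
proof (rule triangle_if_sorted_triangles[OF _ _ assms])
  show "curve_metric R c x y = curve_metric R c y x" for x y
    using det2_swap[of "c x" "c y"] by (simp add: curve_metric_def)
  fix a b e :: real assume "a \<in> {0..1}" "b \<in> {0..1}" "e \<in> {0..1}" "a \<le> b" "b \<le> e"
  then show "curve_metric R c a e \<le> curve_metric R c a b + curve_metric R c b e \<and>
      curve_metric R c a b \<le> curve_metric R c a e + curve_metric R c b e \<and>
      curve_metric R c b e \<le> curve_metric R c a b + curve_metric R c a e"
    using det2_subadditiveD[OF subadd, of a b e] det2_le_sum_right[of a b e]
      det2_le_sum_left[of a b e] star_curve_pos[OF sc]
    by (simp add: curve_metric_sorted add_divide_distrib[symmetric] divide_right_mono)
qed

lemma curve_metric_space: "Metric_space {0..1} (unit_restrict (curve_metric R c))"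
proof
  fix x y z :: real
  show "0 \<le> unit_restrict (curve_metric R c) x y"
    using star_curve_pos[OF sc] by (simp add: unit_restrict_def curve_metric_def)
  show "unit_restrict (curve_metric R c) x y = unit_restrict (curve_metric R c) y x"
    using det2_swap[of "c x" "c y"] by (auto simp: unit_restrict_def curve_metric_def)
  assume x: "x \<in> {0..1}" and y: "y \<in> {0..1}"
  show "unit_restrict (curve_metric R c) x y = 0 \<longleftrightarrow> x = y"
    using star_curve_det2_eq_0_imp_eq[OF sc x y] star_curve_pos[OF sc] x y
    by (auto simp: curve_metric_def)
  assume z: "z \<in> {0..1}"
  show "unit_restrict (curve_metric R c) x z
      \<le> unit_restrict (curve_metric R c) x y + unit_restrict (curve_metric R c) y z"
    using curve_metric_triangle x y z by simp
qed

lemma curve_metric_mtopology: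
  "Metric_space.mtopology {0..1} (unit_restrict (curve_metric R c)) = subtopology euclidean {0..1}"
proof (rule mtopology_eq_euclidean[OF curve_metric_space compact_Icc])
  fix x :: real assume x: "x \<in> {0..1}"
  have "continuous_on {0..1} (curve_metric R c x)"
    unfolding curve_metric_def det2_def using star_curve_continuous[OF sc] star_curve_pos[OF sc]
    by (intro continuous_intros) auto
  moreover have "unit_restrict (curve_metric R c) x y = curve_metric R c x y" if "y \<in> {0..1}" for y
    using x that by simp
  ultimately show "continuous_on {0..1} (unit_restrict (curve_metric R c) x)"
    using continuous_on_cong by metis
qed

lemma curve_metric_ptolemy_equality:
  assumes "0 \<le> x1" "x1 \<le> x2" "x2 \<le> x3" "x3 \<le> x4" "x4 \<le> 1"
  shows "curve_metric R c x1 x3 * curve_metric R c x2 x4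
    = curve_metric R c x1 x2 * curve_metric R c x3 x4 + curve_metric R c x1 x4 * curve_metric R c x3 x2"
proof -
  have "curve_metric R c x3 x2 = det2 (c x2) (c x3) / R"
    using curve_metric_sorted[of x2 x3] det2_swap[of "c x3" "c x2"] assms
    by (simp add: curve_metric_def)
  then show ?thesis
    using curve_metric_sorted assms det2_pluecker[of "c x1" "c x3" "c x2" "c x4"]
    by (simp add: add_divide_distrib)
qed

lemma ptolemy_interval_curve_metric: "ptolemy_interval (curve_metric R c)"
  unfolding ptolemy_interval_def
  using curve_metric_space curve_metric_mtopology curve_metric_ptolemy_equality by blast

lemma curve_metric_0_1: "curve_metric R c 0 1 = R"
  using star_curve_pos[OF sc]
  by (simp add: curve_metric_def star_curve_start[OF sc] star_curve_end[OF sc] det2_def)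

lemma ptolemy_curve_curve_metric: "t \<in> {0..1} \<Longrightarrow> ptolemy_curve (curve_metric R c) t = c t"
  using star_curve_pos[OF sc] curve_Tset_bounds[of t] det2_start[of t] det2_end[of t]
    det2_swap[of "c t" "c 0"]
  by (simp add: ptolemy_curve_def curve_metric_def abs_mult prod_eq_iff)

end

section \<open>Isometries of Ptolemy intervals\<close>

lemma isometric_intervals_if_curve_image:
  assumes P: "ptolemy_interval d" and P': "ptolemy_interval d'" and R: "d 0 1 = d' 0 1"
    and img: "k ` {0..1} = ptolemy_curve d' ` {0..1}"
    and det: "\<And>x y. x \<in> {0..1} \<Longrightarrow> y \<in> {0..1} \<Longrightarrow>
      \<bar>det2 (k x) (k y)\<bar> = \<bar>det2 (ptolemy_curve d x) (ptolemy_curve d y)\<bar>"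
  shows "isometric_intervals d d'"
proof -
  let ?p = "ptolemy_curve d" and ?p' = "ptolemy_curve d'" and ?I = "{0..1::real}"
  have inj: "inj_on ?p' ?I"
    by (rule inj_on_ptolemy_curve[OF P'])
  define f where "f x = the_inv_into ?I ?p' (k x)" for x
  have k_img: "k x \<in> ?p' ` ?I" if "x \<in> ?I" for x
    using img that by blast
  have fI: "f x \<in> ?I" and p'f: "?p' (f x) = k x" if "x \<in> ?I" for x
    unfolding f_def using the_inv_into_into[OF inj k_img[OF that] order_refl]
      f_the_inv_into_f[OF inj k_img[OF that]] by simp_all
  have iso: "d' (f x) (f y) = d x y" if "x \<in> ?I" "y \<in> ?I" for x y
    using ptolemy_eq_abs_det2[OF P' fI fI] ptolemy_eq_abs_det2[OF P that] that
    by (simp add: p'f R det)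
  have "inj_on f ?I"
  proof (rule inj_onI)
    fix x y assume "x \<in> ?I" "y \<in> ?I" "f x = f y"
    then show "x = y"
      using iso[of x y] ptolemy_eq_0_iff[OF P] ptolemy_eq_0_iff[OF P' fI fI] by metis
  qed
  moreover have "f ` ?I = ?I"
  proof
    show "f ` ?I \<subseteq> ?I"
      using fI by blast
    show "?I \<subseteq> f ` ?I"
    proof
      fix s assume s: "s \<in> ?I"
      then obtain x where x: "x \<in> ?I" "k x = ?p' s"
        using img by (metis image_eqI imageE)
      then have "f x = s"
        unfolding f_def using the_inv_into_f_f[OF inj s] by simp
      then show "s \<in> f ` ?I"
        using x by blast
    qed
  qed
  ultimately show ?thesis
    unfolding isometric_intervals_def bij_betw_def using iso by blast
qed

lemma continuous_on_ptolemy_isometry: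
  assumes P: "ptolemy_interval d" and P': "ptolemy_interval d'"
    and fI: "\<And>x. x \<in> {0..1} \<Longrightarrow> f x \<in> {0..1}"
    and iso: "\<And>x y. x \<in> {0..1} \<Longrightarrow> y \<in> {0..1} \<Longrightarrow> d' (f x) (f y) = d x y"
  shows "continuous_on {0..1} f"
  unfolding continuous_on_iff
proof (intro ballI allI impI)
  fix x e :: real assume x: "x \<in> {0..1}" and e: "e > 0"
  obtain r where r: "r > 0" "\<forall>z\<in>{0..1}. d' (f x) z < r \<longrightarrow> dist z (f x) < e"
    using ptolemy_close_if_small[OF P' fI[OF x] e] by blast
  obtain \<delta> where \<delta>: "\<delta> > 0" "\<forall>y\<in>{0..1}. dist y x < \<delta> \<longrightarrow> d x y < r"
    using ptolemy_small_if_close[OF P x r(1)] by blast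
  have "dist (f y) (f x) < e" if "y \<in> {0..1}" "dist y x < \<delta>" for y
    using that r \<delta> iso[OF x] fI by simp
  then show "\<exists>\<delta>>0. \<forall>y\<in>{0..1}. dist y x < \<delta> \<longrightarrow> dist (f y) (f x) < e"
    using \<delta>(1) by blast
qed

lemma bij_betw_unit_interval_ends:
  fixes f :: "real \<Rightarrow> real"
  assumes bij: "bij_betw f {0..1} {0..1}"
  shows "strict_mono_on {0..1} f \<Longrightarrow> f 0 = 0 \<and> f 1 = 1"
    and "strict_antimono_on {0..1} f \<Longrightarrow> f 0 = 1 \<and> f 1 = 0"
proof -
  have "0 \<in> f ` {0..1}" "1 \<in> f ` {0..1}"
    using bij by (simp_all add: bij_betw_def)
  then obtain y0 y1 where y: "y0 \<in> {0..1}" "f y0 = 0" "y1 \<in> {0..1}" "f y1 = 1"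
    by (metis imageE)
  have fI: "f 0 \<in> {0..1}" "f 1 \<in> {0..1}"
    using bij_betw_apply[OF bij] by simp_all
  show "f 0 = 0 \<and> f 1 = 1" if "strict_mono_on {0..1} f"
    using strict_mono_on_leD[OF that, of 0 y0] strict_mono_on_leD[OF that, of y1 1] y fI by force
  assume anti: "strict_antimono_on {0..1} f"
  have le: "f y \<le> f x" if "x \<in> {0..1}" "y \<in> {0..1}" "x \<le> y" for x y
    using monotone_onD[OF anti, of x y] that by (cases "x = y") auto
  show "f 0 = 1 \<and> f 1 = 0"
    using le[of 0 y1] le[of y0 1] y fI by force
qed

lemma curve_image_eq_mod_refl_if_isometric:
  assumes P: "ptolemy_interval d" and P': "ptolemy_interval d'" and "isometric_intervals d d'"
  shows "eq_mod_refl (ptolemy_curve d ` {0..1}) (ptolemy_curve d' ` {0..1})"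
proof -
  let ?I = "{0..1::real}"
  obtain f where bij: "bij_betw f ?I ?I" and iso: "\<forall>x\<in>?I. \<forall>y\<in>?I. d' (f x) (f y) = d x y"
    using assms(3) unfolding isometric_intervals_def by blast
  have fI: "x \<in> ?I \<Longrightarrow> f x \<in> ?I" for x
    by (rule bij_betw_apply[OF bij])
  have img: "f ` ?I = ?I"
    using bij by (simp add: bij_betw_def)
  have "continuous_on ?I f"
    using continuous_on_ptolemy_isometry[OF P P'] fI iso by blast
  then have "strict_mono_on ?I f \<or> strict_antimono_on ?I f"
    using injective_eq_monotone_map[OF is_interval_cc] bij by (simp add: bij_betw_def)
  then show ?thesis
  proof
    assume "strict_mono_on ?I f"
    then have "f 0 = 0" "f 1 = 1"
      using bij_betw_unit_interval_ends(1)[OF bij] by auto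
    then have "ptolemy_curve d' (f t) = ptolemy_curve d t" if "t \<in> ?I" for t
      using iso[rule_format, of t 0] iso[rule_format, of t 1] that by (simp add: ptolemy_curve_def)
    then have "ptolemy_curve d' ` f ` ?I = ptolemy_curve d ` ?I"
      by (simp add: image_image)
    then show ?thesis
      unfolding img eq_mod_refl_def by simp
  next
    assume "strict_antimono_on ?I f"
    then have "f 0 = 1" "f 1 = 0"
      using bij_betw_unit_interval_ends(2)[OF bij] by auto
    then have "ptolemy_curve d' (f t) = swap_refl (ptolemy_curve d t)" if "t \<in> ?I" for t
      using iso[rule_format, of t 0] iso[rule_format, of t 1] that
      by (simp add: ptolemy_curve_def swap_refl_def)
    then have "ptolemy_curve d' ` f ` ?I = swap_refl ` ptolemy_curve d ` ?I"
      by (simp add: image_image)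
    then have "swap_refl ` ptolemy_curve d' ` ?I = ptolemy_curve d ` ?I"
      unfolding img by (simp add: image_image)
    then show ?thesis
      unfolding eq_mod_refl_def by simp
  qed
qed

lemma isometric_intervals_iff_eq_mod_refl:
  assumes P: "ptolemy_interval d" and P': "ptolemy_interval d'" and R: "d 0 1 = d' 0 1"
  shows "isometric_intervals d d' \<longleftrightarrow>
    eq_mod_refl (ptolemy_curve d ` {0..1}) (ptolemy_curve d' ` {0..1})"
proof
  assume "eq_mod_refl (ptolemy_curve d ` {0..1}) (ptolemy_curve d' ` {0..1})"
  then consider "ptolemy_curve d ` {0..1} = ptolemy_curve d' ` {0..1}"
    | "swap_refl ` ptolemy_curve d ` {0..1} = ptolemy_curve d' ` {0..1}"
    unfolding eq_mod_refl_def using swap_refl_image_swap_refl_image by metis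
  then show "isometric_intervals d d'"
  proof cases
    case 1
    then show ?thesis
      by (rule isometric_intervals_if_curve_image[OF P P' R]) simp
  next
    case 2
    then have "(\<lambda>x. swap_refl (ptolemy_curve d x)) ` {0..1} = ptolemy_curve d' ` {0..1}"
      by (simp add: image_image)
    then show ?thesis
      by (rule isometric_intervals_if_curve_image[OF P P' R]) (simp add: det2_swap_refl)
  qed
qed (rule curve_image_eq_mod_refl_if_isometric[OF P P'])

theorem proposition3p7:
  fixes R :: real
  assumes "R > 0"
  shows "(\<forall>d. ptolemy_interval d \<and> d 0 1 = R \<longrightarrow>
            convex_curve R (ptolemy_curve d) \<and>
            ptolemy_curve d ` {0..1} \<subseteq> Tset (e1 R) (e2 R))
       \<and> (\<forall>d d'. ptolemy_interval d \<and> d 0 1 = R \<and> ptolemy_interval d' \<and> d' 0 1 = R \<longrightarrow>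
            (isometric_intervals d d' \<longleftrightarrow>
             eq_mod_refl (ptolemy_curve d ` {0..1}) (ptolemy_curve d' ` {0..1})))
       \<and> (\<forall>c. convex_curve R c \<and> c ` {0..1} \<subseteq> Tset (e1 R) (e2 R) \<longrightarrow>
            (\<exists>d. ptolemy_interval d \<and> d 0 1 = R \<and>
                 eq_mod_refl (ptolemy_curve d ` {0..1}) (c ` {0..1})))"
proof (intro conjI allI impI)
  fix d assume "ptolemy_interval d \<and> d 0 1 = R"
  then show "convex_curve R (ptolemy_curve d)" "ptolemy_curve d ` {0..1} \<subseteq> Tset (e1 R) (e2 R)"
    using convex_curve_ptolemy_curve ptolemy_curve_in_Tset by auto
next
  fix d d' assume "ptolemy_interval d \<and> d 0 1 = R \<and> ptolemy_interval d' \<and> d' 0 1 = R"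
  then show "isometric_intervals d d' \<longleftrightarrow>
      eq_mod_refl (ptolemy_curve d ` {0..1}) (ptolemy_curve d' ` {0..1})"
    using isometric_intervals_iff_eq_mod_refl by simp
next
  fix c assume c: "convex_curve R c \<and> c ` {0..1} \<subseteq> Tset (e1 R) (e2 R)"
  then have sc: "star_curve R c" and T: "c ` {0..1} \<subseteq> Tset (e1 R) (e2 R)"
    and subadd: "det2_subadditive c"
    using convex_curve_iff[OF assms] by auto
  have "ptolemy_curve (curve_metric R c) ` {0..1} = c ` {0..1}"
    using ptolemy_curve_curve_metric[OF sc T subadd] by (rule image_cong[OF refl])
  then show "\<exists>d. ptolemy_interval d \<and> d 0 1 = R \<and>
      eq_mod_refl (ptolemy_curve d ` {0..1}) (c ` {0..1})"
    using ptolemy_interval_curve_metric[OF sc T subadd] curve_metric_0_1[OF sc T subadd]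
    unfolding eq_mod_refl_def by blast
qed

end
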